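(* Let $\gamma_o:\mathbb{R}\to{\rm AdS}$ be a closed (periodic) null curve satisfying the standing assumptions, whose bending $\kappa_o$ is periodic with period $\rho>0$. Let $I\ni0$ be an open interval and let $\kappa:\mathbb{R}\times I\to\mathbb{R}$ be a solution of the KdV equation $\partial_t\kappa+\partial_s^3\kappa-6\kappa\partial_s\kappa=0$ with $\kappa(s,0)=\kappa_o(s)$ such that $\kappa(s+\rho,t)=\kappa(s,t)$ for all $(s,t)$. Let $\gamma:\mathbb{R}\times I\to{\rm AdS}$ be a solution of the LIEN flow $\partial_t\gamma=-2\sqrt2(\kappa T+2B)$ with bending $\kappa$ and $\gamma(s,0)=\gamma_o(s)$. Then, for every $t\in I$, the curve $s\mapsto\gamma(s,t)$ is periodic; indeed the monodromy $t\mapsto\mathcal{F}(\rho,t)\mathcal{F}(0,t)^{-1}$ of the Cartan frame field is constant in $t$.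
   Context: ${\rm AdS}={\rm SL}(2,\mathbb{R})$ with the Lorentzian metric induced by $\langle\cdot,\cdot\rangle$, the polarization of $q(X)=-\det X$ on $2\times2$ real matrices. Null curves are assumed future-directed, without inflection points, parametrized by proper time ($\langle\gamma'',\gamma''\rangle=4$). Bending $\kappa=-\frac1{16}\langle\gamma''',\gamma'''\rangle$; $T=\gamma'/\sqrt2$, $N=\gamma''/2$, $B=\frac1{\sqrt2}\kappa\gamma'-\frac1{2\sqrt2}\gamma'''$. The Cartan frame field is $\mathcal{F}=(\gamma,T,N,B)$, viewed as a map into $4$-tuples of matrices (acting linearly on $\mathbb{R}^{2,2}$ via its coordinates in this basis). A solution of the LIEN flow is a smooth one-parameter family $\gamma(s,t)$ of such null curves (each parametrized by proper time $s$) satisfying $\partial_t\gamma=-2\sqrt2(\kappa T+2B)$. *)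

theory Defs
  imports "HOL-Analysis.Analysis"
begin

type_synonym mat2 = "real^2^2"

definition adsq :: "mat2 \<Rightarrow> real" where
  "adsq X = - det X"

definition ads_inner :: "mat2 \<Rightarrow> mat2 \<Rightarrow> real" where
  "ads_inner X Y = (adsq (X + Y) - adsq X - adsq Y) / 2"

definition in_AdS :: "mat2 \<Rightarrow> bool" where
  "in_AdS X \<longleftrightarrow> det X = 1"

text \<open>Time orientation: the left-invariant timelike vector field X J,
  with J the rotation by a right angle. A tangent vector V at X is future-directed
  if ads_inner V (X J) < 0 (convention).\<close>
definition Jmat :: mat2 where
  "Jmat = (\<chi> i j. if i = 1 \<and> j = 2 then -1 else if i = 2 \<and> j = 1 then 1 else 0)"

definition future_directed :: "mat2 \<Rightarrow> mat2 \<Rightarrow> bool" where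
  "future_directed X V \<longleftrightarrow> ads_inner V (X ** Jmat) < 0"

definition vderiv :: "(real \<Rightarrow> 'a::real_normed_vector) \<Rightarrow> real \<Rightarrow> 'a" where
  "vderiv c = (\<lambda>s. vector_derivative c (at s))"

definition nderiv :: "nat \<Rightarrow> (real \<Rightarrow> 'a::real_normed_vector) \<Rightarrow> real \<Rightarrow> 'a" where
  "nderiv n c = (vderiv ^^ n) c"

definition smooth_curve :: "(real \<Rightarrow> 'a::real_normed_vector) \<Rightarrow> bool" where
  "smooth_curve c \<longleftrightarrow> (\<forall>n s. (nderiv n c has_vector_derivative nderiv (Suc n) c s) (at s))"

definition bending :: "(real \<Rightarrow> mat2) \<Rightarrow> real \<Rightarrow> real" where
  "bending c s = - (1/16) * ads_inner (nderiv 3 c s) (nderiv 3 c s)"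

text \<open>Smooth, future-directed null curve in AdS without inflection points,
  parametrized by proper time.\<close>
definition proper_null_curve :: "(real \<Rightarrow> mat2) \<Rightarrow> bool" where
  "proper_null_curve c \<longleftrightarrow> smooth_curve c \<and>
     (\<forall>s. in_AdS (c s) \<and> nderiv 1 c s \<noteq> 0 \<and>
          ads_inner (nderiv 1 c s) (nderiv 1 c s) = 0 \<and>
          future_directed (c s) (nderiv 1 c s) \<and>
          ads_inner (nderiv 2 c s) (nderiv 2 c s) = 4)"

definition frameT :: "(real \<Rightarrow> mat2) \<Rightarrow> real \<Rightarrow> mat2" where
  "frameT c s = (1 / sqrt 2) *\<^sub>R nderiv 1 c s"

definition frameN :: "(real \<Rightarrow> mat2) \<Rightarrow> real \<Rightarrow> mat2" where
  "frameN c s = (1 / 2) *\<^sub>R nderiv 2 c s"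

definition frameB :: "(real \<Rightarrow> mat2) \<Rightarrow> real \<Rightarrow> mat2" where
  "frameB c s = ((1 / sqrt 2) * bending c s) *\<^sub>R nderiv 1 c s
               - (1 / (2 * sqrt 2)) *\<^sub>R nderiv 3 c s"

definition mcoords :: "mat2 \<Rightarrow> real^4" where
  "mcoords X = (\<chi> k. if k = 1 then X$1$1 else if k = 2 then X$1$2
                      else if k = 3 then X$2$1 else X$2$2)"

definition cartan_frame :: "(real \<Rightarrow> mat2) \<Rightarrow> real \<Rightarrow> real^4^4" where
  "cartan_frame c s = (\<chi> i j. mcoords
      (if j = 1 then c s else if j = 2 then frameT c s
       else if j = 3 then frameN c s else frameB c s) $ i)"

definition monodromy :: "(real \<Rightarrow> mat2) \<Rightarrow> real \<Rightarrow> real^4^4" where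
  "monodromy c \<rho> = cartan_frame c \<rho> ** matrix_inv (cartan_frame c 0)"

definition pd_s :: "(real \<Rightarrow> real \<Rightarrow> 'a::real_normed_vector) \<Rightarrow> real \<Rightarrow> real \<Rightarrow> 'a" where
  "pd_s f = (\<lambda>s t. vector_derivative (\<lambda>x. f x t) (at s))"

definition pd_t :: "(real \<Rightarrow> real \<Rightarrow> 'a::real_normed_vector) \<Rightarrow> real \<Rightarrow> real \<Rightarrow> 'a" where
  "pd_t f = (\<lambda>s t. vector_derivative (\<lambda>y. f s y) (at t))"

text \<open>C^infinity on R x I: all iterated partial derivatives exist and are continuous.\<close>
definition smooth2 :: "real set \<Rightarrow> (real \<Rightarrow> real \<Rightarrow> 'a::real_normed_vector) \<Rightarrow> bool" where
  "smooth2 I f \<longleftrightarrow> (\<forall>ops :: bool list.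
     let g = foldr (\<lambda>b h. if b then pd_s h else pd_t h) ops f in
       continuous_on (UNIV \<times> I) (\<lambda>(s, t). g s t) \<and>
       (\<forall>s. \<forall>t\<in>I. ((\<lambda>x. g x t) has_vector_derivative pd_s g s t) (at s) \<and>
                   ((\<lambda>y. g s y) has_vector_derivative pd_t g s t) (at t)))"

definition KdV_solution :: "real set \<Rightarrow> (real \<Rightarrow> real \<Rightarrow> real) \<Rightarrow> bool" where
  "KdV_solution I k \<longleftrightarrow> smooth2 I k \<and>
     (\<forall>s. \<forall>t\<in>I. pd_t k s t + pd_s (pd_s (pd_s k)) s t - 6 * k s t * pd_s k s t = 0)"

definition LIEN_solution :: "real set \<Rightarrow> (real \<Rightarrow> real \<Rightarrow> mat2) \<Rightarrow> bool" where
  "LIEN_solution I g \<longleftrightarrow> smooth2 I g \<and>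
     (\<forall>t\<in>I. proper_null_curve (\<lambda>s. g s t)) \<and>
     (\<forall>s. \<forall>t\<in>I. pd_t g s t =
        (- 2 * sqrt 2) *\<^sub>R (bending (\<lambda>x. g x t) s *\<^sub>R frameT (\<lambda>x. g x t) s
                            + 2 *\<^sub>R frameB (\<lambda>x. g x t) s))"

end

theory Submission
  imports Defs
begin

text \<open>The derivatives \<open>\<gamma>, \<gamma>', \<gamma>'', \<gamma>'''\<close> of a null curve parametrized by proper time form a basis
  whose Gram matrix depends only on the bending \<open>\<kappa>\<close>. Hence there is a linear map taking this basis
  at \<open>s\<close> to the basis at \<open>s + \<sigma>\<close>; if \<open>\<kappa>\<close> is \<open>\<sigma>\<close>-periodic, the Frenet equation for \<open>\<gamma>''''\<close>
  shows that this map does not depend on \<open>s\<close>, so it sends \<open>\<gamma>(s)\<close> to \<open>\<gamma>(s + \<sigma>)\<close>. Along the LIEN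
  flow the velocity \<open>2\<gamma>''' - 6\<kappa>\<gamma>'\<close> is again transported by this map; differentiating
  \<open>\<gamma>(s + \<sigma>, t) = T\<^sub>t \<gamma>(s, t)\<close> in \<open>t\<close> then shows that \<open>dT\<^sub>t/dt\<close> vanishes on the curve and
  therefore everywhere, so \<open>T\<^sub>t\<close> is constant. For \<open>\<sigma> = \<rho>\<close>, \<open>T\<^sub>t\<close> written in coordinates is the
  monodromy. For closedness choose \<open>\<sigma>\<close> a common period of \<open>\<gamma>\<^sub>o\<close> and of all \<open>\<kappa>(\<cdot>, t)\<close>, since
  then \<open>T\<^sub>t = T\<^sub>0 = id\<close>: if the period \<open>\<omega>\<close> of \<open>\<gamma>\<^sub>o\<close> and \<open>\<rho>\<close> are commensurable a common multiple
  works; otherwise \<open>\<kappa>\<^sub>o\<close> is constant, and the conservation of \<open>\<integral>(\<kappa> - c)\<^sup>2\<close> under KdV keeps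
  \<open>\<kappa>\<close> constant, so \<open>\<omega>\<close> itself works.\<close>

section \<open>The inner product of AdS and the derivative frame of a null curve\<close>

lemma ads_inner_explicit:
  "ads_inner X Y = - (X$1$1 * Y$2$2 + X$2$2 * Y$1$1 - X$1$2 * Y$2$1 - X$2$1 * Y$1$2) / 2"
  unfolding ads_inner_def adsq_def det_2 by (simp add: field_simps)

lemma ads_inner_commute: "ads_inner X Y = ads_inner Y X"
  by (simp add: ads_inner_explicit algebra_simps)

lemma ads_inner_self: "ads_inner X X = - det X"
  by (simp add: ads_inner_explicit det_2 field_simps)

lemma bounded_bilinear_ads_inner: "bounded_bilinear ads_inner"
  unfolding bilinear_conv_bounded_bilinear[symmetric] bilinear_def
  by (auto intro!: linearI simp: ads_inner_explicit field_simps)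

lemmas ads_inner_simps =
  bounded_bilinear.add_left[OF bounded_bilinear_ads_inner]
  bounded_bilinear.add_right[OF bounded_bilinear_ads_inner]
  bounded_bilinear.diff_left[OF bounded_bilinear_ads_inner]
  bounded_bilinear.diff_right[OF bounded_bilinear_ads_inner]
  bounded_bilinear.scaleR_left[OF bounded_bilinear_ads_inner]
  bounded_bilinear.scaleR_right[OF bounded_bilinear_ads_inner]
  bounded_bilinear.zero_left[OF bounded_bilinear_ads_inner]
  bounded_bilinear.zero_right[OF bounded_bilinear_ads_inner]
  bounded_bilinear.minus_left[OF bounded_bilinear_ads_inner]
  bounded_bilinear.minus_right[OF bounded_bilinear_ads_inner]

lemma has_real_derivative_ads_inner:
  assumes "(f has_vector_derivative f') (at s)" "(g has_vector_derivative g') (at s)"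
  shows "((\<lambda>x. ads_inner (f x) (g x)) has_real_derivative
           ads_inner (f s) g' + ads_inner f' (g s)) (at s)"
  using bounded_bilinear.has_vector_derivative[OF bounded_bilinear_ads_inner assms]
  by (simp add: has_real_derivative_iff_has_vector_derivative)

lemma nderiv_0: "nderiv 0 c = c"
  by (simp add: nderiv_def)

lemma nderiv_Suc: "nderiv (Suc k) c = vderiv (nderiv k c)"
  by (simp add: nderiv_def)

lemma proper_null_curve_has_vector_derivative:
  "proper_null_curve c \<Longrightarrow> (nderiv k c has_vector_derivative nderiv (Suc k) c s) (at s)"
  unfolding proper_null_curve_def smooth_curve_def by blast

lemma frame_inner_constant_step:
  assumes c: "proper_null_curve c" and const: "\<And>x. ads_inner (nderiv i c x) (nderiv j c x) = a"
  shows "ads_inner (nderiv i c s) (nderiv (Suc j) c s) + ads_inner (nderiv (Suc i) c s) (nderiv j c s) = 0"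
proof -
  have "((\<lambda>x. ads_inner (nderiv i c x) (nderiv j c x)) has_real_derivative
          ads_inner (nderiv i c s) (nderiv (Suc j) c s) + ads_inner (nderiv (Suc i) c s) (nderiv j c s)) (at s)"
    by (intro has_real_derivative_ads_inner proper_null_curve_has_vector_derivative c)
  moreover have "((\<lambda>x. ads_inner (nderiv i c x) (nderiv j c x)) has_real_derivative 0) (at s)"
    unfolding const by (rule DERIV_const)
  ultimately show ?thesis by (rule DERIV_unique)
qed

definition dbending :: "(real \<Rightarrow> mat2) \<Rightarrow> real \<Rightarrow> real" where
  "dbending c s = - ads_inner (nderiv 3 c s) (nderiv 4 c s) / 8"

lemma bending_has_real_derivative:
  assumes "proper_null_curve c"
  shows "(bending c has_real_derivative dbending c s) (at s)"
proof -
  have "((\<lambda>x. - (1/16) * ads_inner (nderiv 3 c x) (nderiv 3 c x)) has_real_derivative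
          - (1/16) * (ads_inner (nderiv 3 c s) (nderiv 4 c s) + ads_inner (nderiv 4 c s) (nderiv 3 c s))) (at s)"
    using proper_null_curve_has_vector_derivative[OF assms, of 3]
    by (intro DERIV_cmult has_real_derivative_ads_inner) simp_all
  then show ?thesis
    unfolding dbending_def bending_def[abs_def] by (simp add: ads_inner_commute[of "nderiv 4 c s"])
qed

lemma derivative_frame_gram:
  assumes c: "proper_null_curve c"
  shows "ads_inner (nderiv 0 c s) (nderiv 0 c s) = -1"
    "ads_inner (nderiv 0 c s) (nderiv 1 c s) = 0" "ads_inner (nderiv 1 c s) (nderiv 0 c s) = 0"
    "ads_inner (nderiv 0 c s) (nderiv 2 c s) = 0" "ads_inner (nderiv 2 c s) (nderiv 0 c s) = 0"
    "ads_inner (nderiv 0 c s) (nderiv 3 c s) = 0" "ads_inner (nderiv 3 c s) (nderiv 0 c s) = 0"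
    "ads_inner (nderiv 1 c s) (nderiv 1 c s) = 0"
    "ads_inner (nderiv 1 c s) (nderiv 2 c s) = 0" "ads_inner (nderiv 2 c s) (nderiv 1 c s) = 0"
    "ads_inner (nderiv 1 c s) (nderiv 3 c s) = -4" "ads_inner (nderiv 3 c s) (nderiv 1 c s) = -4"
    "ads_inner (nderiv 2 c s) (nderiv 2 c s) = 4"
    "ads_inner (nderiv 2 c s) (nderiv 3 c s) = 0" "ads_inner (nderiv 3 c s) (nderiv 2 c s) = 0"
    "ads_inner (nderiv 3 c s) (nderiv 3 c s) = -16 * bending c s"
    "ads_inner (nderiv 0 c s) (nderiv 4 c s) = 4"
    "ads_inner (nderiv 1 c s) (nderiv 4 c s) = 0"
    "ads_inner (nderiv 2 c s) (nderiv 4 c s) = 16 * bending c s"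
    "ads_inner (nderiv 3 c s) (nderiv 4 c s) = -8 * dbending c s"
proof -
  note step = frame_inner_constant_step[OF c]
  note nat_nums = numeral_3_eq_3 numeral_2_eq_2 eval_nat_numeral
  have g00: "ads_inner (nderiv 0 c x) (nderiv 0 c x) = -1" for x
    using c by (simp add: nderiv_0 ads_inner_self proper_null_curve_def in_AdS_def)
  have g11: "ads_inner (nderiv 1 c x) (nderiv 1 c x) = 0" for x
    using c by (simp add: proper_null_curve_def)
  have g22: "ads_inner (nderiv 2 c x) (nderiv 2 c x) = 4" for x
    using c by (simp add: proper_null_curve_def)
  have g01: "ads_inner (nderiv 0 c x) (nderiv 1 c x) = 0" for x
    using step[OF g00, of x] by (simp add: ads_inner_commute[of "nderiv (Suc 0) c x"])
  have g12: "ads_inner (nderiv 1 c x) (nderiv 2 c x) = 0" for x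
    using step[OF g11, of x] by (simp add: ads_inner_commute numeral_2_eq_2)
  have g23: "ads_inner (nderiv 2 c x) (nderiv 3 c x) = 0" for x
    using step[OF g22, of x] by (simp add: ads_inner_commute nat_nums)
  have g02: "ads_inner (nderiv 0 c x) (nderiv 2 c x) = 0" for x
    using step[OF g01, of x] g11 by (simp add: numeral_2_eq_2)
  have g03: "ads_inner (nderiv 0 c x) (nderiv 3 c x) = 0" for x
    using step[OF g02, of x] g12 by (simp add: nat_nums)
  have g13: "ads_inner (nderiv 1 c x) (nderiv 3 c x) = -4" for x
    using step[OF g12, of x] g22 by (simp add: nat_nums algebra_simps)
  have g04: "ads_inner (nderiv 0 c s) (nderiv 4 c s) = 4"
    using step[OF g03, of s] g13 by (simp add: nat_nums algebra_simps)
  have g14: "ads_inner (nderiv 1 c s) (nderiv 4 c s) = 0"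
    using step[OF g13, of s] g23 by (simp add: nat_nums algebra_simps)
  have g24: "ads_inner (nderiv 2 c s) (nderiv 4 c s) = 16 * bending c s"
    using step[OF g23, of s] by (simp add: nat_nums bending_def algebra_simps)
  show "ads_inner (nderiv 0 c s) (nderiv 0 c s) = -1"
    "ads_inner (nderiv 0 c s) (nderiv 1 c s) = 0" "ads_inner (nderiv 0 c s) (nderiv 2 c s) = 0"
    "ads_inner (nderiv 0 c s) (nderiv 3 c s) = 0" "ads_inner (nderiv 1 c s) (nderiv 1 c s) = 0"
    "ads_inner (nderiv 1 c s) (nderiv 2 c s) = 0" "ads_inner (nderiv 1 c s) (nderiv 3 c s) = -4"
    "ads_inner (nderiv 2 c s) (nderiv 2 c s) = 4" "ads_inner (nderiv 2 c s) (nderiv 3 c s) = 0"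
    "ads_inner (nderiv 3 c s) (nderiv 3 c s) = -16 * bending c s"
    "ads_inner (nderiv 0 c s) (nderiv 4 c s) = 4" "ads_inner (nderiv 1 c s) (nderiv 4 c s) = 0"
    "ads_inner (nderiv 2 c s) (nderiv 4 c s) = 16 * bending c s"
    "ads_inner (nderiv 3 c s) (nderiv 4 c s) = -8 * dbending c s"
    using g00 g01 g02 g03 g11 g12 g13 g22 g23 g04 g14 g24 by (simp_all add: bending_def dbending_def)
  show "ads_inner (nderiv 1 c s) (nderiv 0 c s) = 0" "ads_inner (nderiv 2 c s) (nderiv 0 c s) = 0"
    "ads_inner (nderiv 3 c s) (nderiv 0 c s) = 0" "ads_inner (nderiv 2 c s) (nderiv 1 c s) = 0"
    "ads_inner (nderiv 3 c s) (nderiv 1 c s) = -4" "ads_inner (nderiv 3 c s) (nderiv 2 c s) = 0"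
    using g01 g02 g03 g12 g13 g23 by (metis ads_inner_commute)+
qed

lemmas derivative_frame_gram_simps = derivative_frame_gram[unfolded One_nat_def]

lemma frame_orthogonal_eq_0:
  assumes c: "proper_null_curve c"
    and "ads_inner (nderiv 0 c s) W = 0" "ads_inner (nderiv 1 c s) W = 0"
      "ads_inner (nderiv 2 c s) W = 0" "ads_inner (nderiv 3 c s) W = 0"
  shows "W = 0"
proof -
  define E where "E X = X$1$1 *\<^sub>R nderiv 0 c s + X$1$2 *\<^sub>R nderiv 1 c s
     + X$2$1 *\<^sub>R nderiv 2 c s + X$2$2 *\<^sub>R nderiv 3 c s" for X :: mat2
  have E: "linear E"
    by (rule linearI) (simp_all add: E_def algebra_simps)
  have coeffs_0: "X = 0"
    if "ads_inner (nderiv 0 c s) (E X) = 0" "ads_inner (nderiv 1 c s) (E X) = 0"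
      "ads_inner (nderiv 2 c s) (E X) = 0" "ads_inner (nderiv 3 c s) (E X) = 0" for X
  proof -
    from that have "X$1$1 = 0" "X$2$2 = 0" "X$2$1 = 0" "X$1$2 = 0"
      by (simp_all add: E_def ads_inner_simps derivative_frame_gram_simps[OF c])
    then show "X = 0" by (simp add: vec_eq_iff forall_2)
  qed
  have "inj E"
    unfolding linear_injective_0[OF E] using coeffs_0 by (simp add: ads_inner_simps)
  then obtain X where X: "W = E X"
    using eucl.linear_inj_imp_surj[OF E] by (metis surjD)
  have "X = 0"
    by (rule coeffs_0) (use assms(2-5) in \<open>simp_all add: X\<close>)
  then show "W = 0" by (simp add: X linear_0[OF E])
qed

text \<open>When the Gram matrix of \<open>a\<close> is that of a derivative frame, the four coefficients are
  the dual basis of \<open>a\<close>, so \<open>frame_map a b\<close> is the linear map with \<open>a j \<mapsto> b j\<close>;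
  the bending entering the dual basis is read off from \<open>ads_inner (a 3) (a 3)\<close>.\<close>
definition frame_map :: "(nat \<Rightarrow> mat2) \<Rightarrow> (nat \<Rightarrow> mat2) \<Rightarrow> mat2 \<Rightarrow> mat2" where
  "frame_map a b V =
       (- ads_inner (a 0) V) *\<^sub>R b 0
     + ((-1/16) * ads_inner (a 3) (a 3) * ads_inner (a 1) V - (1/4) * ads_inner (a 3) V) *\<^sub>R b 1
     + ((1/4) * ads_inner (a 2) V) *\<^sub>R b 2
     - ((1/4) * ads_inner (a 1) V) *\<^sub>R b 3"

definition frame_transfer :: "(real \<Rightarrow> mat2) \<Rightarrow> real \<Rightarrow> real \<Rightarrow> mat2 \<Rightarrow> mat2" where
  "frame_transfer c s u = frame_map (\<lambda>j. nderiv j c s) (\<lambda>j. nderiv j c u)"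

lemma linear_frame_map: "linear (frame_map a b)"
proof (rule linearI)
  fix V W :: mat2 and r :: real
  show "frame_map a b (V + W) = frame_map a b V + frame_map a b W"
    unfolding frame_map_def ads_inner_simps by (simp add: algebra_simps add_divide_distrib)
  show "frame_map a b (r *\<^sub>R V) = r *\<^sub>R frame_map a b V"
    unfolding frame_map_def ads_inner_simps by (simp add: algebra_simps)
qed

lemma linear_frame_transfer: "linear (frame_transfer c s u)"
  unfolding frame_transfer_def by (rule linear_frame_map)

lemma frame_transfer_nderiv:
  assumes c: "proper_null_curve c" and "j \<le> 3"
  shows "frame_transfer c s u (nderiv j c s) = nderiv j c u"
proof -
  from \<open>j \<le> 3\<close> consider "j = 0" | "j = 1" | "j = 2" | "j = 3" by linarith
  then show ?thesis
    by cases (simp_all add: frame_transfer_def frame_map_def derivative_frame_gram_simps[OF c])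
qed

lemma frame_transfer_self:
  assumes c: "proper_null_curve c"
  shows "frame_transfer c s s V = V"
proof -
  have "V - frame_transfer c s s V = 0"
    by (rule frame_orthogonal_eq_0[OF c, of s])
      (simp_all add: frame_transfer_def frame_map_def ads_inner_simps derivative_frame_gram_simps[OF c] algebra_simps)
  then show ?thesis by simp
qed

lemma nderiv_4_frenet:
  assumes c: "proper_null_curve c"
  shows "nderiv 4 c s = (-4) *\<^sub>R nderiv 0 c s + (2 * dbending c s) *\<^sub>R nderiv 1 c s
     + (4 * bending c s) *\<^sub>R nderiv 2 c s"
proof -
  have "nderiv 4 c s - ((-4) *\<^sub>R nderiv 0 c s + (2 * dbending c s) *\<^sub>R nderiv 1 c s
     + (4 * bending c s) *\<^sub>R nderiv 2 c s) = 0"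
    by (rule frame_orthogonal_eq_0[OF c, of s]) (simp_all add: ads_inner_simps derivative_frame_gram_simps[OF c])
  then show ?thesis by simp
qed

section \<open>Transport of the derivative frame along a period\<close>

lemma has_vector_derivative_shift_arg:
  assumes "(f has_vector_derivative f') (at (x + \<sigma>))"
  shows "((\<lambda>x. f (x + \<sigma>)) has_vector_derivative f') (at x)"
proof -
  have "((\<lambda>x. x + \<sigma>) has_vector_derivative 1) (at x)"
    by (auto intro!: derivative_eq_intros)
  from vector_diff_chain_at[OF this assms] show ?thesis by (simp add: o_def)
qed

lemma periodic_fun_simple_derivative:
  fixes f :: "real \<Rightarrow> 'a::real_normed_vector"
  assumes per: "periodic_fun_simple f \<sigma>" and f': "\<And>x. (f has_vector_derivative f' x) (at x)"
  shows "periodic_fun_simple f' \<sigma>"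
  unfolding periodic_fun_simple_def
proof
  fix x
  have "((\<lambda>y. f (y + \<sigma>)) has_vector_derivative f' (x + \<sigma>)) (at x)"
    by (rule has_vector_derivative_shift_arg) (rule f')
  moreover have "(\<lambda>y. f (y + \<sigma>)) = f"
    using per by (simp add: periodic_fun_simple_def)
  ultimately show "f' (x + \<sigma>) = f' x"
    using f'[of x] vector_derivative_unique_at by metis
qed

lemma dbending_periodic:
  assumes "proper_null_curve c" "periodic_fun_simple (bending c) \<sigma>"
  shows "periodic_fun_simple (dbending c) \<sigma>"
  using assms(2) bending_has_real_derivative[OF assms(1), unfolded has_real_derivative_iff_has_vector_derivative]
  by (rule periodic_fun_simple_derivative)

lemma frame_transfer_shift_has_derivative:
  assumes c: "proper_null_curve c" and per: "periodic_fun_simple (bending c) \<sigma>"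
  shows "((\<lambda>x. frame_transfer c x (x + \<sigma>) V) has_vector_derivative 0) (at s)"
proof -
  have per_bending: "bending c (s + \<sigma>) = bending c s"
    using per by (simp add: periodic_fun_simple_def)
  have per_dbending: "dbending c (s + \<sigma>) = dbending c s"
    using dbending_periodic[OF c per] by (simp add: periodic_fun_simple_def)
  have numeral_nat_Suc: "Suc 0 = 1" "Suc 1 = 2" "Suc 2 = 3" "Suc 3 = (4::nat)"
    by simp_all
  have d: "((\<lambda>x. nderiv k c x) has_vector_derivative nderiv (Suc k) c s) (at s)" for k
    using proper_null_curve_has_vector_derivative[OF c] by simp
  have d_shift: "((\<lambda>x. nderiv k c (x + \<sigma>)) has_vector_derivative nderiv (Suc k) c (s + \<sigma>)) (at s)" for k
    by (rule has_vector_derivative_shift_arg) (rule proper_null_curve_has_vector_derivative[OF c])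
  have d_inner: "((\<lambda>x. ads_inner (nderiv k c x) V) has_real_derivative ads_inner (nderiv (Suc k) c s) V) (at s)" for k
    using has_real_derivative_ads_inner[OF d, of "\<lambda>_. V" 0] by (simp add: ads_inner_simps)
  have d_bending: "((\<lambda>x. ads_inner (nderiv 3 c x) (nderiv 3 c x)) has_real_derivative - 16 * dbending c s) (at s)"
    using DERIV_cmult[OF bending_has_real_derivative[OF c], of "-16" s]
    by (simp add: bending_def[abs_def])
  show ?thesis
    unfolding frame_transfer_def frame_map_def
    by (rule has_vector_derivative_eq_rhs, (rule derivative_eq_intros d_shift d_inner d_bending refl)+)
      (simp only: numeral_nat_Suc nderiv_4_frenet[OF c] per_bending per_dbending,
       simp add: derivative_frame_gram_simps[OF c] ads_inner_simps algebra_simps add_divide_distrib)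
qed

lemma frame_transfer_shift_constant:
  assumes "proper_null_curve c" "periodic_fun_simple (bending c) \<sigma>"
  shows "frame_transfer c s (s + \<sigma>) = frame_transfer c 0 \<sigma>"
proof
  fix V
  have "\<exists>a. \<forall>x\<in>UNIV. frame_transfer c x (x + \<sigma>) V = a"
    using frame_transfer_shift_has_derivative[OF assms]
    by (intro has_derivative_zero_constant) (auto simp: has_vector_derivative_def)
  then show "frame_transfer c s (s + \<sigma>) V = frame_transfer c 0 \<sigma> V"
    by (metis add_0 UNIV_I)
qed

lemma frame_transfer_period:
  assumes "proper_null_curve c" "periodic_fun_simple (bending c) \<sigma>" "j \<le> 3"
  shows "frame_transfer c 0 \<sigma> (nderiv j c s) = nderiv j c (s + \<sigma>)"
  using frame_transfer_shift_constant[OF assms(1,2), of s] frame_transfer_nderiv[OF assms(1,3)] by metis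

lemma linear_vanishing_on_proper_null_curve:
  fixes L :: "mat2 \<Rightarrow> mat2"
  assumes L: "linear L" and c: "proper_null_curve c" and vanish: "\<And>s. L (c s) = 0"
  shows "L V = 0"
proof -
  have derivs: "L (nderiv k c s) = 0" for k s
  proof (induction k arbitrary: s)
    case 0
    then show ?case by (simp add: nderiv_0 vanish)
  next
    case (Suc k)
    have "((\<lambda>x. L (nderiv k c x)) has_vector_derivative L (nderiv (Suc k) c s)) (at s)"
      using L linear_conv_bounded_linear bounded_linear.has_vector_derivative
        proper_null_curve_has_vector_derivative[OF c] by blast
    then show ?case
      unfolding Suc using vector_derivative_unique_at has_vector_derivative_const by blast
  qed
  have "L V = L (frame_transfer c 0 0 V)"
    by (simp add: frame_transfer_self[OF c])
  also have "\<dots> = 0"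
    by (simp add: frame_transfer_def frame_map_def linear_add[OF L] linear_diff[OF L] linear_scale[OF L] derivs)
  finally show ?thesis .
qed

lemma smooth2_continuous_on:
  "smooth2 I g \<Longrightarrow> continuous_on (UNIV \<times> I) (\<lambda>(s, t). g s t)"
  unfolding smooth2_def by (drule spec[of _ "[]"]) simp

lemma smooth2_has_vector_derivative_s:
  "smooth2 I g \<Longrightarrow> t \<in> I \<Longrightarrow> ((\<lambda>x. g x t) has_vector_derivative pd_s g s t) (at s)"
  unfolding smooth2_def by (drule spec[of _ "[]"]) simp

lemma smooth2_has_vector_derivative_t:
  "smooth2 I g \<Longrightarrow> t \<in> I \<Longrightarrow> ((\<lambda>y. g s y) has_vector_derivative pd_t g s t) (at t)"
  unfolding smooth2_def by (drule spec[of _ "[]"]) simp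

lemma smooth2_pd_s: "smooth2 I g \<Longrightarrow> smooth2 I (pd_s g)"
  unfolding smooth2_def by (intro allI, erule_tac x = "ops @ [True]" in allE) simp

lemma smooth2_pd_t: "smooth2 I g \<Longrightarrow> smooth2 I (pd_t g)"
  unfolding smooth2_def by (intro allI, erule_tac x = "ops @ [False]" in allE) simp

lemma smooth2_funpow_pd_s: "smooth2 I g \<Longrightarrow> smooth2 I ((pd_s ^^ k) g)"
  by (induction k) (simp_all add: smooth2_pd_s)

lemma nderiv_slice: "nderiv k (\<lambda>x. g x t) = (\<lambda>s. (pd_s ^^ k) g s t)"
  by (induction k) (simp_all add: nderiv_0 nderiv_Suc vderiv_def pd_s_def)

lemma smooth2_nderiv_slice_has_vector_derivative_t:
  assumes "smooth2 I g" "t \<in> I"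
  shows "((\<lambda>y. nderiv k (\<lambda>x. g x y) s) has_vector_derivative pd_t ((pd_s ^^ k) g) s t) (at t)"
  unfolding nderiv_slice
  by (rule smooth2_has_vector_derivative_t[OF smooth2_funpow_pd_s[OF assms(1)] assms(2)])

lemma LIEN_velocity:
  assumes "LIEN_solution I \<gamma>" "t \<in> I"
  shows "pd_t \<gamma> s t = 2 *\<^sub>R nderiv 3 (\<lambda>x. \<gamma> x t) s
                       - (6 * bending (\<lambda>x. \<gamma> x t) s) *\<^sub>R nderiv 1 (\<lambda>x. \<gamma> x t) s"
proof -
  have "pd_t \<gamma> s t = (- 2 * sqrt 2) *\<^sub>R (bending (\<lambda>x. \<gamma> x t) s *\<^sub>R frameT (\<lambda>x. \<gamma> x t) s
                            + 2 *\<^sub>R frameB (\<lambda>x. \<gamma> x t) s)"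
    using assms by (simp add: LIEN_solution_def)
  also have "\<dots> = 2 *\<^sub>R nderiv 3 (\<lambda>x. \<gamma> x t) s
                       - (6 * bending (\<lambda>x. \<gamma> x t) s) *\<^sub>R nderiv 1 (\<lambda>x. \<gamma> x t) s"
    by (simp add: frameT_def frameB_def algebra_simps) (simp flip: scaleR_add_left)
  finally show ?thesis .
qed

lemma frame_map_has_vector_derivative:
  assumes a: "\<And>j. ((\<lambda>y. a y j) has_vector_derivative a' j) (at t)"
    and b: "\<And>j. ((\<lambda>y. b y j) has_vector_derivative b' j) (at t)"
  obtains L where "linear L"
    and "\<And>v v'. (v has_vector_derivative v') (at t) \<Longrightarrow>
      ((\<lambda>y. frame_map (a y) (b y) (v y)) has_vector_derivative L (v t) + frame_map (a t) (b t) v') (at t)"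
proof
  define k where "k = (-1/16) * ads_inner (a t 3) (a t 3)"
  define k' where "k' = (-1/16) * (ads_inner (a t 3) (a' 3) + ads_inner (a' 3) (a t 3))"
  define L where "L V =
       (- ads_inner (a' 0) V) *\<^sub>R b t 0 + (- ads_inner (a t 0) V) *\<^sub>R b' 0
     + (k' * ads_inner (a t 1) V + k * ads_inner (a' 1) V - (1/4) * ads_inner (a' 3) V) *\<^sub>R b t 1
     + (k * ads_inner (a t 1) V - (1/4) * ads_inner (a t 3) V) *\<^sub>R b' 1
     + ((1/4) * ads_inner (a' 2) V) *\<^sub>R b t 2 + ((1/4) * ads_inner (a t 2) V) *\<^sub>R b' 2
     - ((1/4) * ads_inner (a' 1) V) *\<^sub>R b t 3 - ((1/4) * ads_inner (a t 1) V) *\<^sub>R b' 3" for V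
  show "linear L"
  proof (rule linearI)
    fix V W :: mat2 and r :: real
    show "L (V + W) = L V + L W"
      unfolding L_def ads_inner_simps by (simp add: algebra_simps add_divide_distrib diff_divide_distrib)
    show "L (r *\<^sub>R V) = r *\<^sub>R L V"
      unfolding L_def ads_inner_simps by (simp add: algebra_simps)
  qed
  fix v :: "real \<Rightarrow> mat2" and v' assume v: "(v has_vector_derivative v') (at t)"
  show "((\<lambda>y. frame_map (a y) (b y) (v y)) has_vector_derivative L (v t) + frame_map (a t) (b t) v') (at t)"
    unfolding frame_map_def
    by (rule has_vector_derivative_eq_rhs, (rule derivative_eq_intros has_real_derivative_ads_inner
          a b v refl)+)
      (simp add: L_def k_def k'_def ads_inner_simps algebra_simps add_divide_distrib)
qed

lemma LIEN_frame_transfer_constant: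
  assumes lien: "LIEN_solution I \<gamma>" and I: "open I" "is_interval I"
    and per: "\<And>t. t \<in> I \<Longrightarrow> periodic_fun_simple (bending (\<lambda>x. \<gamma> x t)) \<sigma>"
    and t1: "t1 \<in> I" and t2: "t2 \<in> I"
  shows "frame_transfer (\<lambda>x. \<gamma> x t1) 0 \<sigma> = frame_transfer (\<lambda>x. \<gamma> x t2) 0 \<sigma>"
proof -
  define T where "T y = frame_transfer (\<lambda>x. \<gamma> x y) 0 \<sigma>" for y
  have sm: "smooth2 I \<gamma>"
    using lien by (simp add: LIEN_solution_def)
  have c: "proper_null_curve (\<lambda>x. \<gamma> x y)" if "y \<in> I" for y
    using lien that by (simp add: LIEN_solution_def)
  have transport: "T y (nderiv j (\<lambda>x. \<gamma> x y) s) = nderiv j (\<lambda>x. \<gamma> x y) (s + \<sigma>)"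
    if "y \<in> I" "j \<le> 3" for y s j
    unfolding T_def using frame_transfer_period[OF c per] that by blast
  have deriv_0: "((\<lambda>y. T y V) has_vector_derivative 0) (at t)" if t: "t \<in> I" for t V
  proof -
    obtain L where L: "linear L" and dT: "\<And>v v'. (v has_vector_derivative v') (at t) \<Longrightarrow>
        ((\<lambda>y. T y (v y)) has_vector_derivative L (v t) + T t v') (at t)"
      using frame_map_has_vector_derivative[of "\<lambda>y j. nderiv j (\<lambda>x. \<gamma> x y) 0"
          "\<lambda>j. pd_t ((pd_s ^^ j) \<gamma>) 0 t" t "\<lambda>y j. nderiv j (\<lambda>x. \<gamma> x y) \<sigma>"
          "\<lambda>j. pd_t ((pd_s ^^ j) \<gamma>) \<sigma> t"]
        smooth2_nderiv_slice_has_vector_derivative_t[OF sm t]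
      unfolding T_def frame_transfer_def by blast
    have dt: "((\<lambda>y. \<gamma> s y) has_vector_derivative pd_t \<gamma> s t) (at t)" for s
      by (rule smooth2_has_vector_derivative_t[OF sm t])
    have L_curve: "L (\<gamma> s t) = 0" for s
    proof -
      have "T y (\<gamma> s y) = \<gamma> (s + \<sigma>) y" if "y \<in> I" for y
        using transport[OF that, of 0 s] by (simp add: nderiv_0)
      then have "((\<lambda>y. \<gamma> (s + \<sigma>) y) has_vector_derivative L (\<gamma> s t) + T t (pd_t \<gamma> s t)) (at t)"
        using has_vector_derivative_transform_within_open[OF dT[OF dt] I(1) t] by blast
      then have "pd_t \<gamma> (s + \<sigma>) t = L (\<gamma> s t) + T t (pd_t \<gamma> s t)"
        using dt vector_derivative_unique_at by blast
      moreover have "T t (pd_t \<gamma> s t) = pd_t \<gamma> (s + \<sigma>) t"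
        using per[OF t] linear_frame_transfer[of "\<lambda>x. \<gamma> x t" 0 \<sigma>]
        by (simp add: LIEN_velocity[OF lien t] T_def[symmetric] linear_diff linear_scale transport[OF t]
            periodic_fun_simple_def)
      ultimately show ?thesis by simp
    qed
    have "L W = 0" for W
      using linear_vanishing_on_proper_null_curve[OF L c[OF t]] L_curve by blast
    then show ?thesis
      using dT[of "\<lambda>_. V" 0] by (simp add: linear_0[OF linear_frame_transfer] T_def)
  qed
  show ?thesis
  proof
    fix V
    obtain C where "\<And>y. y \<in> I \<Longrightarrow> T y V = C"
      using has_vector_derivative_zero_constant[of I "\<lambda>y. T y V"] I(2) deriv_0
      by (metis is_interval_convex has_vector_derivative_at_within)
    then show "frame_transfer (\<lambda>x. \<gamma> x t1) 0 \<sigma> V = frame_transfer (\<lambda>x. \<gamma> x t2) 0 \<sigma> V"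
      using t1 t2 unfolding T_def by metis
  qed
qed

section \<open>The monodromy of the Cartan frame\<close>

definition mat2_of_coords :: "real^4 \<Rightarrow> mat2" where
  "mat2_of_coords x = (\<chi> i j. if i = 1 then (if j = 1 then x$1 else x$2) else (if j = 1 then x$3 else x$4))"

lemma mat2_of_coords_mcoords: "mat2_of_coords (mcoords X) = X"
  by (simp add: vec_eq_iff forall_2 mcoords_def mat2_of_coords_def)

lemma linear_mcoords: "linear mcoords"
  by (rule linearI) (simp_all add: vec_eq_iff mcoords_def)

lemma linear_mat2_of_coords: "linear mat2_of_coords"
  by (rule linearI) (simp_all add: vec_eq_iff mat2_of_coords_def)

definition coord_matrix :: "(mat2 \<Rightarrow> mat2) \<Rightarrow> real^4^4" where
  "coord_matrix L = matrix (\<lambda>x. mcoords (L (mat2_of_coords x)))"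

lemma coord_matrix_mult_mcoords:
  assumes "linear L"
  shows "coord_matrix L *v mcoords X = mcoords (L X)"
proof -
  have "linear (\<lambda>x. mcoords (L (mat2_of_coords x)))"
    using linear_compose[OF linear_compose[OF linear_mat2_of_coords assms] linear_mcoords]
    by (simp add: o_def)
  from matrix_works[OF this[folded linear_matrix_vector_mul_eq], of "mcoords X"] show ?thesis
    by (simp add: coord_matrix_def mat2_of_coords_mcoords)
qed

definition cartan_vector :: "(real \<Rightarrow> mat2) \<Rightarrow> real \<Rightarrow> 4 \<Rightarrow> mat2" where
  "cartan_vector c s j = (if j = 1 then c s else if j = 2 then frameT c s
       else if j = 3 then frameN c s else frameB c s)"

lemma cartan_frame_columns: "cartan_frame c s = (\<chi> i j. mcoords (cartan_vector c s j) $ i)"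
  by (simp add: cartan_frame_def cartan_vector_def)

lemma frame_transfer_cartan_vector:
  assumes c: "proper_null_curve c" and "bending c u = bending c s"
  shows "frame_transfer c s u (cartan_vector c s j) = cartan_vector c u j"
proof -
  have L: "linear (frame_transfer c s u)" by (rule linear_frame_transfer)
  have "frame_transfer c s u (c s) = c u"
    using frame_transfer_nderiv[OF c, of 0 s u] by (simp add: nderiv_0)
  then show ?thesis
    using exhaust_4[of j] assms(2)
    by (auto simp: cartan_vector_def frameT_def frameN_def frameB_def linear_scale[OF L] linear_diff[OF L]
        frame_transfer_nderiv[OF c])
qed

lemma invertible_cartan_frame:
  assumes c: "proper_null_curve c"
  shows "invertible (cartan_frame c s)"
proof -
  define F where "F = cartan_frame c s"
  define comb where "comb x = x$1 *\<^sub>R c s + x$2 *\<^sub>R frameT c s + x$3 *\<^sub>R frameN c s + x$4 *\<^sub>R frameB c s"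
    for x :: "real^4"
  have F_mult: "F *v x = mcoords (comb x)" for x
    unfolding comb_def linear_add[OF linear_mcoords] linear_scale[OF linear_mcoords]
    by (simp add: F_def cartan_frame_columns cartan_vector_def vec_eq_iff matrix_vector_mult_def sum_4
        algebra_simps)
  have "x = 0" if "F *v x = 0" for x
  proof -
    have "comb x = 0"
      using that mat2_of_coords_mcoords[of "comb x"] mat2_of_coords_mcoords[of 0]
      by (simp add: F_mult linear_0[OF linear_mcoords])
    then have orth: "ads_inner (nderiv k c s) (comb x) = 0" for k
      by (simp add: ads_inner_simps)
    have c_s: "c s = nderiv 0 c s" by (simp add: nderiv_0)
    note simps = comb_def frameT_def frameN_def frameB_def ads_inner_simps derivative_frame_gram_simps[OF c] c_s
    have "x$1 = 0" using orth[of 0] by (simp add: simps)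
    moreover have "x$4 = 0" using orth[of 1] by (simp add: simps)
    moreover have "x$3 = 0" using orth[of 2] \<open>x$4 = 0\<close> by (simp add: simps)
    moreover have "x$2 = 0" using orth[of 3] \<open>x$4 = 0\<close> by (simp add: simps)
    ultimately show "x = 0" by (simp add: vec_eq_iff forall_4)
  qed
  then have "inj ((*v) F)"
    by (simp add: linear_injective_0[OF matrix_vector_mul_linear] del: matrix_vector_mul_linear)
  then show ?thesis
    unfolding F_def using matrix_left_invertible_injective invertible_left_inverse by blast
qed

lemma matrix_inv_right: "invertible (A::real^'n^'n) \<Longrightarrow> A ** matrix_inv A = mat 1"
  unfolding invertible_def matrix_inv_def by (rule someI_ex[THEN conjunct1])

lemma monodromy_eq_coord_matrix:
  assumes c: "proper_null_curve c" and "bending c \<rho> = bending c 0"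
  shows "monodromy c \<rho> = coord_matrix (frame_transfer c 0 \<rho>)"
proof -
  have columns: "A ** (\<chi> i j. v j $ i) = (\<chi> i j. (A *v v j) $ i)" for A :: "real^4^4" and v :: "4 \<Rightarrow> real^4"
    by (simp add: vec_eq_iff matrix_matrix_mult_def matrix_vector_mult_def)
  have "cartan_frame c \<rho> = coord_matrix (frame_transfer c 0 \<rho>) ** cartan_frame c 0"
    unfolding cartan_frame_columns columns coord_matrix_mult_mcoords[OF linear_frame_transfer]
      frame_transfer_cartan_vector[OF assms] ..
  then show ?thesis
    by (simp add: monodromy_def matrix_mul_assoc[symmetric] matrix_inv_right[OF invertible_cartan_frame[OF c]])
qed

lemma LIEN_monodromy_constant:
  assumes lien: "LIEN_solution I \<gamma>" and I: "open I" "is_interval I"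
    and per: "\<And>t. t \<in> I \<Longrightarrow> periodic_fun_simple (bending (\<lambda>x. \<gamma> x t)) \<rho>"
    and t1: "t1 \<in> I" and t2: "t2 \<in> I"
  shows "monodromy (\<lambda>s. \<gamma> s t1) \<rho> = monodromy (\<lambda>s. \<gamma> s t2) \<rho>"
proof -
  have c: "proper_null_curve (\<lambda>s. \<gamma> s t)" if "t \<in> I" for t
    using lien that by (simp add: LIEN_solution_def)
  have "bending (\<lambda>x. \<gamma> x t) \<rho> = bending (\<lambda>x. \<gamma> x t) 0" if "t \<in> I" for t
    using per[OF that] unfolding periodic_fun_simple_def by (metis add_0)
  then show ?thesis
    using monodromy_eq_coord_matrix[OF c[OF t1]] monodromy_eq_coord_matrix[OF c[OF t2]]
      LIEN_frame_transfer_constant[OF lien I per t1 t2] t1 t2 by simp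
qed

section \<open>Functions with incommensurable periods\<close>

lemma periodic_fun_simple_of_int:
  assumes "periodic_fun_simple f (p::real)"
  shows "periodic_fun_simple f (of_int k * p)"
proof -
  interpret periodic_fun_simple f p by (rule assms)
  show ?thesis unfolding periodic_fun_simple_def by (simp add: plus_of_int)
qed

lemma periodic_fun_simple_of_nat:
  "periodic_fun_simple f (p::real) \<Longrightarrow> periodic_fun_simple f (of_nat n * p)"
  using periodic_fun_simple_of_int[of f p "int n"] by simp

lemma periodic_fun_simple_diff:
  assumes p: "periodic_fun_simple f (p::real)" and q: "periodic_fun_simple f q"
  shows "periodic_fun_simple f (p - q)"
  unfolding periodic_fun_simple_def
proof
  fix x
  have "f (x + (p - q)) = f (x - q + p)" by (simp add: algebra_simps)
  also have "\<dots> = f (x - q)"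
    using p by (simp add: periodic_fun_simple_def)
  also have "\<dots> = f (x - q + q)"
    using q by (simp only: periodic_fun_simple_def)
  finally show "f (x + (p - q)) = f x" by simp
qed

lemma periodic_fun_simple_reduce:
  assumes per: "periodic_fun_simple f (p::real)" and "p > 0"
  obtains y where "0 \<le> y" "y < p" "f x = f y"
proof
  define k where "k = \<lfloor>x / p\<rfloor>"
  have "of_int k \<le> x / p" "x / p < of_int k + 1" unfolding k_def by linarith+
  with \<open>p > 0\<close> show "0 \<le> x - of_int k * p" "x - of_int k * p < p"
    by (auto simp: field_simps)
  show "f x = f (x - of_int k * p)"
    using periodic_fun_simple_of_int[OF per, of k] unfolding periodic_fun_simple_def by (metis diff_add_cancel)
qed

lemma periodic_fun_simple_least_period:
  fixes f :: "real \<Rightarrow> 'a"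
  assumes e: "e > 0" and large: "\<And>p. periodic_fun_simple f p \<Longrightarrow> 0 < p \<Longrightarrow> e \<le> p"
    and q: "periodic_fun_simple f q" "q > 0"
  obtains p0 where "p0 > 0"
    "\<And>q. periodic_fun_simple f q \<Longrightarrow> q > 0 \<Longrightarrow> \<exists>k::nat. k > 0 \<and> q = real k * p0"
proof -
  define S where "S = {p. periodic_fun_simple f p \<and> 0 < p}"
  have S_ne: "S \<noteq> {}"
    using q by (auto simp: S_def)
  have S_bdd: "bdd_below S"
    unfolding bdd_below_def S_def by (intro exI[of _ 0]) auto
  define p0 where "p0 = Inf S"
  have lower: "p0 \<le> p" if "p \<in> S" for p
    unfolding p0_def using that S_bdd by (rule cInf_lower)
  have "e \<le> p0"
    unfolding p0_def using S_ne by (rule cInf_greatest) (auto simp: S_def large)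
  have p0_S: "p0 \<in> S"
  proof (rule ccontr)
    assume "p0 \<notin> S"
    obtain p1 where p1: "p1 \<in> S" "p1 < p0 + e"
      using cInf_less_iff[OF S_ne S_bdd] e unfolding p0_def by (metis less_add_same_cancel1)
    have "p0 < p1" using lower[OF p1(1)] \<open>p0 \<notin> S\<close> p1(1) by (cases "p0 = p1") auto
    then obtain p2 where p2: "p2 \<in> S" "p2 < p1"
      using cInf_less_iff[OF S_ne S_bdd] unfolding p0_def by blast
    have "p0 < p2" using lower[OF p2(1)] \<open>p0 \<notin> S\<close> p2(1) by (cases "p0 = p2") auto
    have "e \<le> p1 - p2"
      using p1 p2 by (intro large periodic_fun_simple_diff) (auto simp: S_def)
    with p1 \<open>p0 < p2\<close> show False by simp
  qed
  show ?thesis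
  proof
    show "p0 > 0" using \<open>e \<le> p0\<close> e by simp
    fix q assume q: "periodic_fun_simple f q" "q > 0"
    define k where "k = \<lfloor>q / p0\<rfloor>"
    define r where "r = q - of_int k * p0"
    have "of_int k \<le> q / p0" "q / p0 < of_int k + 1" unfolding k_def by linarith+
    with \<open>p0 > 0\<close> have r: "0 \<le> r" "r < p0" unfolding r_def by (auto simp: field_simps)
    have "periodic_fun_simple f r"
      unfolding r_def using q(1) p0_S by (intro periodic_fun_simple_diff periodic_fun_simple_of_int) (auto simp: S_def)
    with r lower have "r = 0" unfolding S_def by fastforce
    then have qk: "q = of_int k * p0" unfolding r_def by simp
    with q(2) \<open>p0 > 0\<close> have "k > 0" by (simp add: zero_less_mult_iff)
    with qk show "\<exists>k::nat. k > 0 \<and> q = real k * p0" by (intro exI[of _ "nat k"]) simp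
  qed
qed

lemma incommensurable_periods_arbitrarily_small:
  fixes f :: "real \<Rightarrow> 'a"
  assumes "periodic_fun_simple f \<rho>" "periodic_fun_simple f \<omega>" "\<rho> > 0" "\<omega> > 0"
    and incomm: "\<not> (\<exists>a b::nat. a > 0 \<and> b > 0 \<and> real a * \<omega> = real b * \<rho>)"
    and "e > 0"
  shows "\<exists>p. periodic_fun_simple f p \<and> 0 < p \<and> p < e"
proof (rule ccontr)
  assume "\<not> ?thesis"
  then have large: "\<And>p. periodic_fun_simple f p \<Longrightarrow> 0 < p \<Longrightarrow> e \<le> p" by (meson not_le)
  obtain p0 where p0: "p0 > 0"
    "\<And>q. periodic_fun_simple f q \<Longrightarrow> q > 0 \<Longrightarrow> \<exists>k::nat. k > 0 \<and> q = real k * p0"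
    using periodic_fun_simple_least_period[OF \<open>e > 0\<close> large assms(1,3)] by blast
  obtain a :: nat where "a > 0" "\<rho> = real a * p0"
    using p0(2)[OF assms(1,3)] by blast
  moreover obtain b :: nat where "b > 0" "\<omega> = real b * p0"
    using p0(2)[OF assms(2,4)] by blast
  ultimately have "real a * \<omega> = real b * \<rho>" by simp
  with incomm \<open>a > 0\<close> \<open>b > 0\<close> show False by blast
qed

lemma continuous_arbitrarily_small_periods_constant:
  fixes f :: "real \<Rightarrow> real"
  assumes cont: "\<And>x. isCont f x"
    and small: "\<And>e. e > 0 \<Longrightarrow> \<exists>p. periodic_fun_simple f p \<and> 0 < p \<and> p < e"
  shows "f x = f 0"
proof -
  have "\<bar>f x - f 0\<bar> < \<epsilon>" if "\<epsilon> > 0" for \<epsilon>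
  proof -
    obtain \<delta> where "\<delta> > 0" and \<delta>: "\<And>y. \<bar>y\<bar> < \<delta> \<Longrightarrow> \<bar>f y - f 0\<bar> < \<epsilon>"
      using cont[of 0] \<open>\<epsilon> > 0\<close> unfolding continuous_at_eps_delta dist_real_def by auto
    obtain p where p: "periodic_fun_simple f p" "0 < p" "p < \<delta>"
      using small[OF \<open>\<delta> > 0\<close>] by blast
    obtain y where "0 \<le> y" "y < p" "f x = f y"
      using periodic_fun_simple_reduce[OF p(1,2)] by blast
    with p \<delta> show ?thesis by simp
  qed
  from this[of "\<bar>f x - f 0\<bar>"] show ?thesis
    by (cases "f x = f 0") auto
qed

section \<open>Periodic solutions of KdV and closedness of the flow\<close>

lemma smooth2_has_real_derivative_s:
  fixes g :: "real \<Rightarrow> real \<Rightarrow> real"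
  shows "smooth2 I g \<Longrightarrow> t \<in> I \<Longrightarrow> ((\<lambda>x. g x t) has_real_derivative pd_s g s t) (at s)"
  unfolding has_real_derivative_iff_has_vector_derivative by (rule smooth2_has_vector_derivative_s)

lemma smooth2_has_real_derivative_t:
  fixes g :: "real \<Rightarrow> real \<Rightarrow> real"
  shows "smooth2 I g \<Longrightarrow> t \<in> I \<Longrightarrow> ((\<lambda>y. g s y) has_real_derivative pd_t g s t) (at t)"
  unfolding has_real_derivative_iff_has_vector_derivative by (rule smooth2_has_vector_derivative_t)

text \<open>The energy density \<open>(\<kappa> - c)\<^sup>2\<close> satisfies a conservation law: its time derivative
  \<open>2 (\<kappa> - c) (6 \<kappa> \<kappa>\<^sub>s - \<kappa>\<^sub>s\<^sub>s\<^sub>s)\<close> is the \<open>s\<close>-derivative of the flux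
  \<open>-2 (\<kappa> - c) \<kappa>\<^sub>s\<^sub>s + \<kappa>\<^sub>s\<^sup>2 + 4 (\<kappa> - c)\<^sup>3 + 6 c (\<kappa> - c)\<^sup>2\<close>.\<close>
lemma KdV_energy_flux_integral:
  assumes kdv: "KdV_solution I \<kappa>" and t: "t \<in> I"
    and per: "periodic_fun_simple (\<lambda>s. \<kappa> s t) \<rho>" and "0 \<le> \<rho>"
  shows "((\<lambda>s. 2 * (\<kappa> s t - c) * pd_t \<kappa> s t) has_integral 0) {0..\<rho>}"
proof -
  have sm: "smooth2 I \<kappa>"
    using kdv by (simp add: KdV_solution_def)
  have kdv_t: "pd_t \<kappa> s t = 6 * \<kappa> s t * pd_s \<kappa> s t - pd_s (pd_s (pd_s \<kappa>)) s t" for s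
    using kdv t by (simp add: KdV_solution_def algebra_simps)
  note d0 = smooth2_has_real_derivative_s[OF sm t]
  note d1 = smooth2_has_real_derivative_s[OF smooth2_pd_s[OF sm] t]
  note d2 = smooth2_has_real_derivative_s[OF smooth2_pd_s[OF smooth2_pd_s[OF sm]] t]
  have per1: "periodic_fun_simple (\<lambda>s. pd_s \<kappa> s t) \<rho>"
    using per d0 unfolding has_real_derivative_iff_has_vector_derivative by (rule periodic_fun_simple_derivative)
  have per2: "periodic_fun_simple (\<lambda>s. pd_s (pd_s \<kappa>) s t) \<rho>"
    using per1 d1 unfolding has_real_derivative_iff_has_vector_derivative by (rule periodic_fun_simple_derivative)
  define H where "H s = -2 * (\<kappa> s t - c) * pd_s (pd_s \<kappa>) s t + (pd_s \<kappa> s t)^2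
      + 4 * (\<kappa> s t - c)^3 + 6 * c * (\<kappa> s t - c)^2" for s
  have "((\<lambda>s. 2 * (\<kappa> s t - c) * pd_t \<kappa> s t) has_integral H \<rho> - H 0) {0..\<rho>}"
  proof (rule fundamental_theorem_of_calculus[OF \<open>0 \<le> \<rho>\<close>])
    fix x
    have "(H has_real_derivative 2 * (\<kappa> x t - c) * pd_t \<kappa> x t) (at x)"
      unfolding H_def kdv_t
      by (rule DERIV_cong, (rule derivative_eq_intros d0 d1 d2 refl)+)
        (simp add: algebra_simps power2_eq_square power3_eq_cube)
    then show "(H has_vector_derivative 2 * (\<kappa> x t - c) * pd_t \<kappa> x t) (at x within {0..\<rho>})"
      by (simp add: has_real_derivative_iff_has_vector_derivative has_vector_derivative_at_within)
  qed
  moreover have "H \<rho> = H 0"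
    using per per1 per2 unfolding periodic_fun_simple_def H_def by (metis add_0)
  ultimately show ?thesis by simp
qed

lemma KdV_energy_constant:
  assumes kdv: "KdV_solution I \<kappa>" and I: "is_interval I"
    and per: "\<And>t. t \<in> I \<Longrightarrow> periodic_fun_simple (\<lambda>s. \<kappa> s t) \<rho>" and "0 \<le> \<rho>"
  obtains C where "\<And>t. t \<in> I \<Longrightarrow> integral {0..\<rho>} (\<lambda>s. (\<kappa> s t - c)\<^sup>2) = C"
proof -
  have sm: "smooth2 I \<kappa>"
    using kdv by (simp add: KdV_solution_def)
  have "convex I"
    using I by (simp add: is_interval_convex)
  have "((\<lambda>t. integral {0..\<rho>} (\<lambda>s. (\<kappa> s t - c)\<^sup>2)) has_field_derivative 0) (at t within I)"
    if t: "t \<in> I" for t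
  proof -
    have "((\<lambda>t. integral (cbox 0 \<rho>) (\<lambda>s. (\<kappa> s t - c)\<^sup>2)) has_field_derivative
        integral (cbox 0 \<rho>) (\<lambda>s. 2 * (\<kappa> s t - c) * pd_t \<kappa> s t)) (at t within I)"
    proof (rule leibniz_rule_field_derivative[OF _ _ _ t \<open>convex I\<close>])
      fix y s assume y: "y \<in> I"
      show "((\<lambda>y. (\<kappa> s y - c)\<^sup>2) has_field_derivative 2 * (\<kappa> s y - c) * pd_t \<kappa> s y) (at y within I)"
        by (rule has_field_derivative_at_within, rule DERIV_cong,
            (rule derivative_eq_intros smooth2_has_real_derivative_t[OF sm y] refl)+) simp
      have "continuous_on {0..\<rho>} (\<lambda>s. \<kappa> s y)"
        using smooth2_has_real_derivative_s[OF sm y] by (intro continuous_at_imp_continuous_on) (metis DERIV_isCont)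
      then show "(\<lambda>s. (\<kappa> s y - c)\<^sup>2) integrable_on cbox 0 \<rho>"
        unfolding cbox_interval by (intro integrable_continuous_interval continuous_intros)
    next
      have "continuous_on (UNIV \<times> I) (\<lambda>(s, t). 2 * (\<kappa> s t - c) * pd_t \<kappa> s t)"
        using smooth2_continuous_on[OF sm] smooth2_continuous_on[OF smooth2_pd_t[OF sm]]
        by (simp add: split_beta) (intro continuous_intros)
      moreover have "continuous_on (I \<times> cbox 0 \<rho>) (\<lambda>(y, s). (s, y))"
        unfolding split_beta by (intro continuous_intros)
      moreover have "(\<lambda>(y, s). (s, y)) ` (I \<times> cbox 0 \<rho>) \<subseteq> UNIV \<times> I"
        by auto
      ultimately show "continuous_on (I \<times> cbox 0 \<rho>) (\<lambda>(y, s). 2 * (\<kappa> s y - c) * pd_t \<kappa> s y)"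
        by (rule continuous_on_compose2[elim_format]) (simp add: case_prod_unfold)
    qed
    moreover have "integral (cbox 0 \<rho>) (\<lambda>s. 2 * (\<kappa> s t - c) * pd_t \<kappa> s t) = 0"
      unfolding cbox_interval by (rule integral_unique[OF KdV_energy_flux_integral[OF kdv t per[OF t] \<open>0 \<le> \<rho>\<close>]])
    ultimately show ?thesis
      unfolding cbox_interval by simp
  qed
  then show ?thesis
    using has_field_derivative_zero_constant[OF \<open>convex I\<close>] that by blast
qed

lemma KdV_solution_constant:
  assumes kdv: "KdV_solution I \<kappa>" and I: "is_interval I" "0 \<in> I"
    and per: "\<And>t. t \<in> I \<Longrightarrow> periodic_fun_simple (\<lambda>s. \<kappa> s t) \<rho>" and "\<rho> > 0"
    and init: "\<And>s. \<kappa> s 0 = c" and t: "t \<in> I"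
  shows "\<kappa> s t = c"
proof -
  have sm: "smooth2 I \<kappa>"
    using kdv by (simp add: KdV_solution_def)
  obtain C where C: "\<And>t. t \<in> I \<Longrightarrow> integral {0..\<rho>} (\<lambda>s. (\<kappa> s t - c)\<^sup>2) = C"
    using KdV_energy_constant[OF kdv I(1) per] \<open>\<rho> > 0\<close> by (metis less_eq_real_def)
  have "continuous_on {0..\<rho>} (\<lambda>s. \<kappa> s t)"
    using smooth2_has_real_derivative_s[OF sm t] by (intro continuous_at_imp_continuous_on) (metis DERIV_isCont)
  then have cont: "continuous_on (cbox 0 \<rho>) (\<lambda>s. (\<kappa> s t - c)\<^sup>2)"
    unfolding cbox_interval by (intro continuous_intros)
  have "integral {0..\<rho>} (\<lambda>s. (\<kappa> s t - c)\<^sup>2) = 0"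
    using C[OF t] C[OF I(2)] init by simp
  with cont have integral_0: "((\<lambda>s. (\<kappa> s t - c)\<^sup>2) has_integral 0) (cbox 0 \<rho>)"
    using integrable_continuous_interval unfolding cbox_interval by (metis has_integral_integral)
  obtain y where y: "0 \<le> y" "y < \<rho>" "\<kappa> s t = \<kappa> y t"
    using periodic_fun_simple_reduce[OF per[OF t] \<open>\<rho> > 0\<close>] by blast
  have "(\<kappa> y t - c)\<^sup>2 = 0"
    by (rule has_integral_0_cbox_imp_0[OF cont _ integral_0]) (use y \<open>\<rho> > 0\<close> in auto)
  with y show ?thesis by simp
qed

lemma KdV_common_period:
  assumes kdv: "KdV_solution I \<kappa>" and I: "is_interval I" "0 \<in> I"
    and per: "\<And>t. t \<in> I \<Longrightarrow> periodic_fun_simple (\<lambda>s. \<kappa> s t) \<rho>" and "\<rho> > 0"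
    and per0: "periodic_fun_simple (\<lambda>s. \<kappa> s 0) \<omega>" and "\<omega> > 0"
  obtains n :: nat where "n > 0" "\<And>t. t \<in> I \<Longrightarrow> periodic_fun_simple (\<lambda>s. \<kappa> s t) (real n * \<omega>)"
proof (cases "\<exists>a b::nat. a > 0 \<and> b > 0 \<and> real a * \<omega> = real b * \<rho>")
  case True
  then obtain a b :: nat where "a > 0" "real a * \<omega> = real b * \<rho>"
    by blast
  with that periodic_fun_simple_of_nat[OF per] show ?thesis
    by metis
next
  case False
  have "isCont (\<lambda>s. \<kappa> s 0) x" for x
    using kdv I(2) smooth2_has_real_derivative_s DERIV_isCont by (metis KdV_solution_def)
  from continuous_arbitrarily_small_periods_constant[OF this
      incommensurable_periods_arbitrarily_small[OF per[OF I(2)] per0 \<open>\<rho> > 0\<close> \<open>\<omega> > 0\<close> False]]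
  have "\<kappa> s t = \<kappa> 0 0" if "t \<in> I" for s t
    using KdV_solution_constant[OF kdv I per \<open>\<rho> > 0\<close> _ that] by blast
  then show ?thesis
    using that[of 1] by (simp add: periodic_fun_simple_def)
qed

lemma nderiv_periodic:
  assumes "smooth_curve c" "periodic_fun_simple c \<sigma>"
  shows "periodic_fun_simple (nderiv k c) \<sigma>"
proof (induction k)
  case 0
  then show ?case using assms(2) by (simp add: nderiv_0)
next
  case (Suc k)
  with assms(1) show ?case
    unfolding smooth_curve_def by (auto intro: periodic_fun_simple_derivative)
qed

lemma bending_periodic:
  "smooth_curve c \<Longrightarrow> periodic_fun_simple c \<sigma> \<Longrightarrow> periodic_fun_simple (bending c) \<sigma>"
  using nderiv_periodic[of c \<sigma> 3] by (simp add: periodic_fun_simple_def bending_def)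

lemma LIEN_slice_periodic:
  assumes lien: "LIEN_solution I \<gamma>" and I: "open I" "is_interval I" "0 \<in> I"
    and per: "\<And>t. t \<in> I \<Longrightarrow> periodic_fun_simple (bending (\<lambda>x. \<gamma> x t)) \<sigma>"
    and per0: "periodic_fun_simple (\<lambda>s. \<gamma> s 0) \<sigma>" and t: "t \<in> I"
  shows "periodic_fun_simple (\<lambda>s. \<gamma> s t) \<sigma>"
  unfolding periodic_fun_simple_def
proof
  fix s
  have c: "proper_null_curve (\<lambda>x. \<gamma> x y)" if "y \<in> I" for y
    using lien that by (simp add: LIEN_solution_def)
  have "\<gamma> (s + \<sigma>) t = frame_transfer (\<lambda>x. \<gamma> x t) 0 \<sigma> (\<gamma> s t)"
    using frame_transfer_period[OF c[OF t] per[OF t], of 0 s] by (simp add: nderiv_0)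
  also have "\<dots> = frame_transfer (\<lambda>x. \<gamma> x 0) 0 \<sigma> (\<gamma> s t)"
    using LIEN_frame_transfer_constant[OF lien I(1,2) per t I(3)] by simp
  also have "\<dots> = frame_transfer (\<lambda>x. \<gamma> x 0) 0 0 (\<gamma> s t)"
  proof -
    have "smooth_curve (\<lambda>x. \<gamma> x 0)"
      using c[OF I(3)] by (simp add: proper_null_curve_def)
    from nderiv_periodic[OF this per0]
    have "nderiv j (\<lambda>x. \<gamma> x 0) \<sigma> = nderiv j (\<lambda>x. \<gamma> x 0) 0" for j
      unfolding periodic_fun_simple_def by (metis add_0)
    then show ?thesis by (simp add: frame_transfer_def)
  qed
  also have "\<dots> = \<gamma> s t"
    by (rule frame_transfer_self[OF c[OF I(3)]])
  finally show "\<gamma> (s + \<sigma>) t = \<gamma> s t" .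
qed

theorem mainTheorem3:
  fixes \<gamma>o :: "real \<Rightarrow> mat2"
    and \<rho> :: real
    and I :: "real set"
    and \<kappa> :: "real \<Rightarrow> real \<Rightarrow> real"
    and \<gamma> :: "real \<Rightarrow> real \<Rightarrow> mat2"
  assumes curve: "proper_null_curve \<gamma>o"
    and closed: "\<exists>\<omega>>0. \<forall>s. \<gamma>o (s + \<omega>) = \<gamma>o s"
    and rho_pos: "\<rho> > 0"
    and bend_per: "\<forall>s. bending \<gamma>o (s + \<rho>) = bending \<gamma>o s"
    and I_open: "open I" and I_interval: "is_interval I" and I_zero: "0 \<in> I"
    and kdv: "KdV_solution I \<kappa>"
    and kdv_init: "\<forall>s. \<kappa> s 0 = bending \<gamma>o s"
    and kdv_per: "\<forall>s. \<forall>t\<in>I. \<kappa> (s + \<rho>) t = \<kappa> s t"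
    and lien: "LIEN_solution I \<gamma>"
    and lien_bend: "\<forall>s. \<forall>t\<in>I. bending (\<lambda>x. \<gamma> x t) s = \<kappa> s t"
    and lien_init: "\<forall>s. \<gamma> s 0 = \<gamma>o s"
  shows "(\<forall>t\<in>I. \<exists>\<omega>>0. \<forall>s. \<gamma> (s + \<omega>) t = \<gamma> s t) \<and>
         (\<forall>t\<in>I. monodromy (\<lambda>s. \<gamma> s t) \<rho> = monodromy (\<lambda>s. \<gamma> s 0) \<rho>)"
proof -
  have slice_0: "(\<lambda>s. \<gamma> s 0) = \<gamma>o"
    using lien_init by auto
  have bending_slice: "bending (\<lambda>x. \<gamma> x t) = (\<lambda>s. \<kappa> s t)" if "t \<in> I" for t
    using lien_bend that by auto
  have \<kappa>_per: "periodic_fun_simple (\<lambda>s. \<kappa> s t) \<rho>" if "t \<in> I" for t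
    using kdv_per that by (simp add: periodic_fun_simple_def)
  have bending_per: "periodic_fun_simple (bending (\<lambda>x. \<gamma> x t)) \<rho>" if "t \<in> I" for t
    using \<kappa>_per bending_slice that by simp
  have "monodromy (\<lambda>s. \<gamma> s t) \<rho> = monodromy (\<lambda>s. \<gamma> s 0) \<rho>" if "t \<in> I" for t
    using LIEN_monodromy_constant[OF lien I_open I_interval bending_per that I_zero] .
  moreover obtain \<omega> where "\<omega> > 0" and \<gamma>o_per: "periodic_fun_simple \<gamma>o \<omega>"
    using closed by (auto simp: periodic_fun_simple_def)
  moreover have "periodic_fun_simple (\<lambda>s. \<kappa> s 0) \<omega>"
    using bending_periodic[OF _ \<gamma>o_per] curve kdv_init by (simp add: proper_null_curve_def)
  then obtain n :: nat where "n > 0" and "\<And>t. t \<in> I \<Longrightarrow> periodic_fun_simple (\<lambda>s. \<kappa> s t) (real n * \<omega>)"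
    using KdV_common_period[OF kdv I_interval I_zero \<kappa>_per rho_pos _ \<open>\<omega> > 0\<close>] by blast
  then have "periodic_fun_simple (\<lambda>s. \<gamma> s t) (real n * \<omega>)" if "t \<in> I" for t
    using LIEN_slice_periodic[OF lien I_open I_interval I_zero _ _ that] bending_slice slice_0
      periodic_fun_simple_of_nat[OF \<gamma>o_per] by simp
  ultimately show ?thesis
    using \<open>n > 0\<close> \<open>\<omega> > 0\<close> by (auto simp: periodic_fun_simple_def intro!: exI[of _ "real n * \<omega>"])
qed

end
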